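(* Let $\mathcal{R}$ be a left-linear, left-finite TRS and suppose $s$ strongly $p$-converges to $t$ in $\mathcal{R}$. Then for each finite set $P$ of non-$\bot$ positions of $t$, there is a finite reduction $s\to^* t'$ in $\mathcal{R}$ such that $t$ and $t'$ coincide in $P$ (i.e. $t(\pi)=t'(\pi)$ for all $\pi\in P$).
   Context: Left-finite = all left-hand sides finite. Partial terms over $\Sigma_\bot=\Sigma\uplus\{\bot\}$ ordered by $\le_\bot$ (replacing subterms by $\bot$) form a complete semilattice; $\liminf_{\iota\to\alpha}a_\iota=\bigvee_{\beta<\alpha}\bigwedge_{\beta\le\iota<\alpha}a_\iota$. A reduction $(t_\iota\to_{\pi_\iota}t_{\iota+1})_{\iota<\alpha}$ with contexts $c_\iota$ ($t_\iota$ with position $\pi_\iota$ replaced by $\bot$) strongly $p$-converges to $t$ if $\liminf_{\iota\to\lambda}c_\iota=t_\lambda$ for every limit $\lambda<\alpha$ and $t$ is the last term (closed) or $t=\liminf_{\iota\to\alpha}c_\iota$ (open). *)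

theory Defs
  imports Main
begin

datatype ('f, 'v) lab = Fun 'f | Var 'v | Bot

type_synonym pos = "nat list"

type_synonym ('f, 'v) pterm = "pos \<Rightarrow> ('f, 'v) lab option"

definition wf_pterm :: "('f \<Rightarrow> nat) \<Rightarrow> ('f, 'v) pterm \<Rightarrow> bool" where
  "wf_pterm ar t \<longleftrightarrow> t [] \<noteq> None \<and>
     (\<forall>p i. t (p @ [i]) \<noteq> None \<longleftrightarrow> (\<exists>f. t p = Some (Fun f) \<and> i < ar f))"

definition total :: "('f, 'v) pterm \<Rightarrow> bool" where
  "total t \<longleftrightarrow> (\<forall>p. t p \<noteq> Some Bot)"

definition vars_of :: "('f, 'v) pterm \<Rightarrow> 'v set" where
  "vars_of t = {x. \<exists>p. t p = Some (Var x)}"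

definition subt :: "('f, 'v) pterm \<Rightarrow> pos \<Rightarrow> ('f, 'v) pterm" where
  "subt t p = (\<lambda>q. t (p @ q))"

definition repl :: "('f, 'v) pterm \<Rightarrow> pos \<Rightarrow> ('f, 'v) pterm \<Rightarrow> ('f, 'v) pterm" where
  "repl t p u = (\<lambda>q. if \<exists>q2. q = p @ q2 then u (drop (length p) q) else t q)"

definition bot_term :: "('f, 'v) pterm" where
  "bot_term = (\<lambda>q. if q = [] then Some Bot else None)"

definition ctx :: "('f, 'v) pterm \<Rightarrow> pos \<Rightarrow> ('f, 'v) pterm" where
  "ctx t p = repl t p bot_term"

definition var_prefix :: "('f, 'v) pterm \<Rightarrow> pos \<Rightarrow> (pos \<times> 'v) option" where
  "var_prefix l q = (if \<exists>q1 q2 x. q = q1 @ q2 \<and> l q1 = Some (Var x)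
      then Some (SOME (q1, x). \<exists>q2. q = q1 @ q2 \<and> l q1 = Some (Var x)) else None)"

definition subst :: "('v \<Rightarrow> ('f, 'v) pterm) \<Rightarrow> ('f, 'v) pterm \<Rightarrow> ('f, 'v) pterm" where
  "subst \<sigma> l = (\<lambda>q. case var_prefix l q of
      None \<Rightarrow> l q
    | Some (q1, x) \<Rightarrow> \<sigma> x (drop (length q1) q))"

definition trs :: "('f \<Rightarrow> nat) \<Rightarrow> (('f, 'v) pterm \<times> ('f, 'v) pterm) set \<Rightarrow> bool" where
  "trs ar R \<longleftrightarrow> (\<forall>(l, r) \<in> R. wf_pterm ar l \<and> wf_pterm ar r \<and> total l \<and> total r \<and>
      (\<forall>x. l [] \<noteq> Some (Var x)) \<and> vars_of r \<subseteq> vars_of l)"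

definition left_linear :: "(('f, 'v) pterm \<times> ('f, 'v) pterm) set \<Rightarrow> bool" where
  "left_linear R \<longleftrightarrow> (\<forall>(l, r) \<in> R. \<forall>p p' x.
      l p = Some (Var x) \<and> l p' = Some (Var x) \<longrightarrow> p = p')"

definition left_finite :: "(('f, 'v) pterm \<times> ('f, 'v) pterm) set \<Rightarrow> bool" where
  "left_finite R \<longleftrightarrow> (\<forall>(l, r) \<in> R. finite {p. l p \<noteq> None})"

definition rstep_at :: "('f \<Rightarrow> nat) \<Rightarrow> (('f, 'v) pterm \<times> ('f, 'v) pterm) set \<Rightarrow> pos \<Rightarrow>
    ('f, 'v) pterm \<Rightarrow> ('f, 'v) pterm \<Rightarrow> bool" where
  "rstep_at ar R p t t' \<longleftrightarrow> (\<exists>l r \<sigma>. (l, r) \<in> R \<and> (\<forall>x. wf_pterm ar (\<sigma> x)) \<and>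
      t p \<noteq> None \<and> subt t p = subst \<sigma> l \<and> t' = repl t p (subst \<sigma> r))"

definition rstep :: "('f \<Rightarrow> nat) \<Rightarrow> (('f, 'v) pterm \<times> ('f, 'v) pterm) set \<Rightarrow>
    ('f, 'v) pterm \<Rightarrow> ('f, 'v) pterm \<Rightarrow> bool" where
  "rstep ar R t t' \<longleftrightarrow> (\<exists>p. rstep_at ar R p t t')"

definition le_bot :: "('f, 'v) pterm \<Rightarrow> ('f, 'v) pterm \<Rightarrow> bool" where
  "le_bot s t \<longleftrightarrow> (\<forall>p. s p \<noteq> None \<longrightarrow> t p \<noteq> None) \<and>
      (\<forall>p a. s p = Some a \<and> a \<noteq> Bot \<longrightarrow> t p = Some a)"

definition is_glb :: "('f \<Rightarrow> nat) \<Rightarrow> ('f, 'v) pterm set \<Rightarrow> ('f, 'v) pterm \<Rightarrow> bool" where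
  "is_glb ar A g \<longleftrightarrow> wf_pterm ar g \<and> (\<forall>a\<in>A. le_bot g a) \<and>
      (\<forall>h. wf_pterm ar h \<and> (\<forall>a\<in>A. le_bot h a) \<longrightarrow> le_bot h g)"

definition is_lub :: "('f \<Rightarrow> nat) \<Rightarrow> ('f, 'v) pterm set \<Rightarrow> ('f, 'v) pterm \<Rightarrow> bool" where
  "is_lub ar A g \<longleftrightarrow> wf_pterm ar g \<and> (\<forall>a\<in>A. le_bot a g) \<and>
      (\<forall>h. wf_pterm ar h \<and> (\<forall>a\<in>A. le_bot a h) \<longrightarrow> le_bot g h)"

text \<open>Ordinals are elements of a well-ordered type.\<close>
definition liminf_is :: "('f \<Rightarrow> nat) \<Rightarrow> ('i::wellorder \<Rightarrow> ('f, 'v) pterm) \<Rightarrow> 'i \<Rightarrow> ('f, 'v) pterm \<Rightarrow> bool" where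
  "liminf_is ar a lam x \<longleftrightarrow>
     is_lub ar {g. \<exists>\<beta><lam. is_glb ar {a i | i. \<beta> \<le> i \<and> i < lam} g} x"

definition osuc :: "'i::wellorder \<Rightarrow> 'i" where
  "osuc i = (LEAST j. i < j)"

definition ozero :: "'i::wellorder" where
  "ozero = (LEAST j. True)"

definition is_limit :: "'i::wellorder \<Rightarrow> bool" where
  "is_limit lam \<longleftrightarrow> (\<exists>i. i < lam) \<and> (\<forall>i<lam. \<exists>j. i < j \<and> j < lam)"

text \<open>It strongly p-converges to
  \<open>t\<close> iff at every limit \<open>\<lambda> \<le> \<alpha>\<close> the term \<open>ts \<lambda>\<close> is the liminf of the contexts,
  and \<open>t = ts \<alpha>\<close> (the last term if \<open>\<alpha>\<close> is zero or a successor, the liminf of the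
  contexts if \<open>\<alpha>\<close> is a limit).\<close>
definition strongly_p_converges ::
  "('f \<Rightarrow> nat) \<Rightarrow> (('f, 'v) pterm \<times> ('f, 'v) pterm) set \<Rightarrow>
   'i::wellorder \<Rightarrow> ('i \<Rightarrow> ('f, 'v) pterm) \<Rightarrow> ('i \<Rightarrow> pos) \<Rightarrow>
   ('f, 'v) pterm \<Rightarrow> ('f, 'v) pterm \<Rightarrow> bool" where
  "strongly_p_converges ar R \<alpha> ts ps s t \<longleftrightarrow>
     ts ozero = s \<and>
     (\<forall>i\<le>\<alpha>. wf_pterm ar (ts i)) \<and>
     (\<forall>i<\<alpha>. rstep_at ar R (ps i) (ts i) (ts (osuc i))) \<and>
     (\<forall>lam\<le>\<alpha>. is_limit lam \<longrightarrow> liminf_is ar (\<lambda>i. ctx (ts i) (ps i)) lam (ts lam)) \<and>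
     t = ts \<alpha>"

end

theory Submission
  imports Defs
begin

(* Transfinite induction along the reduction shows that every finite set of non-bot positions
   of every term ts gamma is reproduced by some finite reduct of s.  At a successor step this
   uses that, for a left-linear and left-finite rule, the result of a step at finitely many
   positions depends on only finitely many positions of the redex term: the (finite) pattern of
   the left-hand side and the ancestors of the positions in question.  Any term agreeing there
   admits the same step with an equal result at those positions.  At a limit, a non-bot symbol
   of the limit inferior of the contexts is eventually constant, so finitely many positions are
   all settled from some earlier index on. *)

section \<open>Well-formed partial terms and substitution\<close>

lemma wf_pterm_root: "wf_pterm ar t \<Longrightarrow> t [] \<noteq> None"
  by (simp add: wf_pterm_def)

lemma wf_pterm_child:
  "wf_pterm ar t \<Longrightarrow> t (p @ [i]) \<noteq> None \<longleftrightarrow> (\<exists>f. t p = Some (Fun f) \<and> i < ar f)"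
  by (simp add: wf_pterm_def)

lemma wf_pterm_ancestor_Fun:
  assumes "wf_pterm ar t" "t (q @ j # rest) \<noteq> None"
  shows "\<exists>f. t q = Some (Fun f) \<and> j < ar f"
  using assms(2)
proof (induction rest rule: rev_induct)
  case Nil
  then show ?case using wf_pterm_child[OF assms(1), of q j] by simp
next
  case (snoc k rest)
  then show ?case using wf_pterm_child[OF assms(1), of "q @ j # rest" k] by auto
qed

lemma wf_pterm_Var_prefix_unique:
  assumes "wf_pterm ar l" "l q1 = Some (Var x)" "l q1' = Some (Var x')" "q1 @ q2 = q1' @ q2'"
  shows "q1 = q1'"
proof -
  have no_Var_above: False if "l a = Some (Var y)" "l (a @ j # rest) = Some b" for a y j rest b
    using wf_pterm_ancestor_Fun[OF assms(1), of a j rest] that by auto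
  from assms(4) obtain us where "q1 = q1' @ us \<and> us @ q2 = q2' \<or> q1 @ us = q1' \<and> q2 = us @ q2'"
    by (auto simp: append_eq_append_conv2)
  then show ?thesis
    using assms(2,3) by (cases us) (auto dest: no_Var_above)
qed

lemma var_prefix_eq_None_iff:
  "var_prefix l q = None \<longleftrightarrow> (\<nexists>q1 q2 x. q = q1 @ q2 \<and> l q1 = Some (Var x))"
  by (simp add: var_prefix_def)

lemma var_prefix_SomeD:
  assumes "var_prefix l q = Some (q1, x)"
  shows "\<exists>q2. q = q1 @ q2 \<and> l q1 = Some (Var x)"
proof -
  let ?P = "\<lambda>(q1, x). \<exists>q2. q = q1 @ q2 \<and> l q1 = Some (Var x)"
  have "\<exists>y. ?P y" and "(SOME y. ?P y) = (q1, x)"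
    using assms by (auto simp: var_prefix_def split: if_splits)
  then show ?thesis using someI_ex[of ?P] by simp
qed

lemma var_prefix_cases:
  obtains "var_prefix l q = None" | q1 q2 x where "q = q1 @ q2" "l q1 = Some (Var x)"
  by (cases "var_prefix l q") (auto dest!: var_prefix_SomeD)

lemma var_prefix_append:
  assumes "wf_pterm ar l" "l q1 = Some (Var x)"
  shows "var_prefix l (q1 @ q2) = Some (q1, x)"
proof -
  have "\<exists>q1' q2' x'. q1 @ q2 = q1' @ q2' \<and> l q1' = Some (Var x')"
    using assms(2) by blast
  then have "var_prefix l (q1 @ q2) \<noteq> None"
    unfolding var_prefix_eq_None_iff by simp
  then obtain q1' x' where vp: "var_prefix l (q1 @ q2) = Some (q1', x')"
    by auto
  from var_prefix_SomeD[OF vp]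
  obtain q2' where "q1 @ q2 = q1' @ q2'" and Var_x': "l q1' = Some (Var x')"
    by blast
  then have "q1 = q1'"
    using wf_pterm_Var_prefix_unique[OF assms Var_x'] by blast
  then show ?thesis using vp assms(2) Var_x' by simp
qed

lemma var_prefix_prefix_None: "var_prefix l (q @ q') = None \<Longrightarrow> var_prefix l q = None"
  unfolding var_prefix_eq_None_iff by (metis append.assoc)

lemma var_prefix_Fun:
  assumes "wf_pterm ar l" "l q = Some (Fun f)"
  shows "var_prefix l q = None"
  unfolding var_prefix_eq_None_iff
proof clarify
  fix q1 q2 x assume "q = q1 @ q2" "l q1 = Some (Var x)"
  with assms show False
    using wf_pterm_ancestor_Fun[OF assms(1), of q1] by (cases q2) auto
qed

lemma subst_var_free: "var_prefix l q = None \<Longrightarrow> subst \<sigma> l q = l q"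
  by (simp add: subst_def)

lemma subst_below_Var:
  "wf_pterm ar l \<Longrightarrow> l q1 = Some (Var x) \<Longrightarrow> subst \<sigma> l (q1 @ q2) = \<sigma> x q2"
  by (simp add: subst_def var_prefix_append)

lemma subst_Fun_position:
  "wf_pterm ar l \<Longrightarrow> l q = Some (Fun f) \<Longrightarrow> subst \<sigma> l q = Some (Fun f)"
  by (simp add: subst_var_free var_prefix_Fun)

lemma wf_subst:
  assumes wl: "wf_pterm ar l" and ws: "\<And>x. wf_pterm ar (\<sigma> x)"
  shows "wf_pterm ar (subst \<sigma> l)"
  unfolding wf_pterm_def
proof (intro conjI allI)
  show "subst \<sigma> l [] \<noteq> None"
    using wf_pterm_root[OF wl] wf_pterm_root[OF ws] subst_below_Var[OF wl, of "[]" _ _ "[]"]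
    by (cases rule: var_prefix_cases[of l "[]"]) (auto simp: subst_var_free)
next
  fix p i
  show "subst \<sigma> l (p @ [i]) \<noteq> None \<longleftrightarrow> (\<exists>f. subst \<sigma> l p = Some (Fun f) \<and> i < ar f)"
  proof (cases rule: var_prefix_cases[of l p])
    case p_var_free: 1
    show ?thesis
    proof (cases rule: var_prefix_cases[of l "p @ [i]"])
      case 1
      then show ?thesis using p_var_free wf_pterm_child[OF wl] by (simp add: subst_var_free)
    next
      case (2 q1 q2 x)
      then have "q1 = p @ [i]"
        using p_var_free by (cases q2 rule: rev_cases) (auto simp: var_prefix_eq_None_iff)
      then show ?thesis
        using 2 p_var_free wf_pterm_child[OF wl, of p i] wf_pterm_root[OF ws]
        by (auto simp: subst_var_free subst_below_Var[OF wl, of _ _ _ "[]", simplified])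
    qed
  next
    case (2 q1 q2 x)
    then show ?thesis
      using subst_below_Var[OF wl 2(2)] wf_pterm_child[OF ws[of x]] by simp
  qed
qed

lemma wf_repl:
  assumes wt: "wf_pterm ar t" and tp: "t p \<noteq> None" and wu: "wf_pterm ar u"
  shows "wf_pterm ar (repl t p u)"
  unfolding wf_pterm_def
proof (intro conjI allI)
  show "repl t p u [] \<noteq> None"
    using wf_pterm_root[OF wt] wf_pterm_root[OF wu] by (auto simp: repl_def)
next
  fix q i
  show "repl t p u (q @ [i]) \<noteq> None \<longleftrightarrow> (\<exists>f. repl t p u q = Some (Fun f) \<and> i < ar f)"
  proof (cases "\<exists>q'. q = p @ q'")
    case True
    then obtain q' where "q = p @ q'" by blast
    then show ?thesis using wf_pterm_child[OF wu, of q' i] by (auto simp: repl_def)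
  next
    case q_outside: False
    show ?thesis
    proof (cases "q @ [i] = p")
      case True
      then show ?thesis
        using q_outside tp wf_pterm_root[OF wu] wf_pterm_child[OF wt, of q i] by (auto simp: repl_def)
    next
      case False
      then have "\<nexists>q'. q @ [i] = p @ q'"
        using q_outside by (auto simp: append_eq_append_conv2 Cons_eq_append_conv)
      then show ?thesis using q_outside wf_pterm_child[OF wt, of q i] by (simp add: repl_def)
    qed
  qed
qed

lemma wf_subt: "wf_pterm ar t \<Longrightarrow> t p \<noteq> None \<Longrightarrow> wf_pterm ar (subt t p)"
  unfolding wf_pterm_def subt_def by (metis append.assoc append_Nil2)

lemma wf_bot_term: "wf_pterm ar bot_term"
  unfolding wf_pterm_def bot_term_def by auto

lemma rstep_at_preserves_wf:
  assumes "trs ar R" "rstep_at ar R p t t'" "wf_pterm ar t"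
  shows "wf_pterm ar t'"
proof -
  obtain l r \<sigma> where "(l, r) \<in> R" "\<forall>x. wf_pterm ar (\<sigma> x)" "t p \<noteq> None"
    "t' = repl t p (subst \<sigma> r)"
    using assms(2) unfolding rstep_at_def by blast
  moreover from \<open>(l, r) \<in> R\<close> have "wf_pterm ar r"
    using assms(1) unfolding trs_def by auto
  ultimately show ?thesis using assms(3) wf_repl wf_subst by metis
qed

section \<open>Limit inferior of contexts\<close>

definition nonbot_positions :: "('f, 'v) pterm \<Rightarrow> pos set" where
  "nonbot_positions t = {\<pi>. t \<pi> \<noteq> None \<and> t \<pi> \<noteq> Some Bot}"

lemma ctx_outside: "\<nexists>q. p = \<pi> @ q \<Longrightarrow> ctx x \<pi> p = x p"
  by (simp add: ctx_def repl_def)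

lemma ctx_below: "ctx x \<pi> (\<pi> @ q) = (if q = [] then Some Bot else None)"
  by (simp add: ctx_def repl_def bot_term_def)

lemma ctx_eq_nonBot: "ctx t q \<pi> = Some a \<Longrightarrow> a \<noteq> Bot \<Longrightarrow> t \<pi> = Some a"
  unfolding ctx_def repl_def bot_term_def by (auto split: if_splits)

lemma le_bot_ctxI:
  assumes wg: "wf_pterm ar g" and gx: "le_bot g x"
    and x\<pi>: "x \<pi> = Some a" "a \<noteq> Bot" and g\<pi>: "g \<pi> \<noteq> Some a"
  shows "le_bot g (ctx x \<pi>)"
proof -
  have g_below_\<pi>: "q = [] \<and> c = Bot" if gq: "g (\<pi> @ q) = Some c" for q c
  proof (cases q)
    case Nil
    with gx x\<pi> g\<pi> gq show ?thesis unfolding le_bot_def by fastforce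
  next
    case (Cons j rest)
    then obtain f where "g \<pi> = Some (Fun f)"
      using wf_pterm_ancestor_Fun[OF wg] gq by blast
    with gx x\<pi> g\<pi> show ?thesis unfolding le_bot_def by fastforce
  qed
  show ?thesis
    unfolding le_bot_def
  proof (intro conjI allI impI)
    fix p assume "g p \<noteq> None"
    then show "ctx x \<pi> p \<noteq> None"
      using g_below_\<pi> gx ctx_outside[of p \<pi> x] ctx_below[of x \<pi>] unfolding le_bot_def
      by (cases "\<exists>q. p = \<pi> @ q") auto
  next
    fix p b assume "g p = Some b \<and> b \<noteq> Bot"
    then show "ctx x \<pi> p = Some b"
      using g_below_\<pi> gx ctx_outside[of p \<pi> x] unfolding le_bot_def
      by (cases "\<exists>q. p = \<pi> @ q") auto
  qed
qed

lemma liminf_is_eventually: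
  assumes li: "liminf_is ar c lam x" and x\<pi>: "x \<pi> = Some a" "a \<noteq> Bot"
  shows "\<exists>\<beta><lam. \<forall>i. \<beta> \<le> i \<and> i < lam \<longrightarrow> c i \<pi> = Some a"
proof -
  define G where "G = {g. \<exists>\<beta><lam. is_glb ar {c i |i. \<beta> \<le> i \<and> i < lam} g}"
  have wx: "wf_pterm ar x" and ub: "\<And>g. g \<in> G \<Longrightarrow> le_bot g x"
    and least: "\<And>h. wf_pterm ar h \<Longrightarrow> \<forall>g\<in>G. le_bot g h \<Longrightarrow> le_bot x h"
    using li unfolding liminf_is_def is_lub_def G_def by auto
  have "\<exists>g\<in>G. g \<pi> = Some a"
  proof (rule ccontr)
    \<comment> \<open>otherwise \<open>ctx x \<pi>\<close> bounds \<open>G\<close> from above, contradicting the minimality of \<open>x\<close>\<close>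
    assume no_a: "\<not> (\<exists>g\<in>G. g \<pi> = Some a)"
    have "le_bot g (ctx x \<pi>)" if "g \<in> G" for g
    proof (rule le_bot_ctxI)
      show "wf_pterm ar g" using \<open>g \<in> G\<close> unfolding G_def is_glb_def by blast
    qed (use ub[OF \<open>g \<in> G\<close>] x\<pi> no_a \<open>g \<in> G\<close> in auto)
    moreover have "wf_pterm ar (ctx x \<pi>)"
      unfolding ctx_def using wf_repl[OF wx _ wf_bot_term] x\<pi> by simp
    ultimately have "le_bot x (ctx x \<pi>)" using least by blast
    then have "ctx x \<pi> \<pi> = Some a"
      using x\<pi> unfolding le_bot_def by blast
    then show False
      using x\<pi>(2) ctx_below[of x \<pi> "[]"] by simp
  qed
  then obtain g \<beta> where g: "g \<pi> = Some a" and "\<beta> < lam"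
    and glb: "is_glb ar {c i |i. \<beta> \<le> i \<and> i < lam} g"
    unfolding G_def by auto
  have "c i \<pi> = Some a" if "\<beta> \<le> i" "i < lam" for i
  proof -
    have "le_bot g (c i)" using glb that unfolding is_glb_def by blast
    then show ?thesis using g x\<pi>(2) unfolding le_bot_def by blast
  qed
  then show ?thesis using \<open>\<beta> < lam\<close> by blast
qed

lemma liminf_ctx_eventually_agrees:
  assumes li: "liminf_is ar (\<lambda>i. ctx (ts i) (ps i)) lam (ts lam)" and "is_limit lam"
    and "finite P" "P \<subseteq> nonbot_positions (ts lam)"
  obtains \<beta> where "\<beta> < lam" "\<forall>\<pi>\<in>P. ts \<beta> \<pi> = ts lam \<pi>"
proof -
  have "\<exists>\<beta><lam. \<forall>i. \<beta> \<le> i \<and> i < lam \<longrightarrow> ts i \<pi> = ts lam \<pi>" if "\<pi> \<in> P" for \<pi>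
  proof -
    obtain a where a: "ts lam \<pi> = Some a" "a \<noteq> Bot"
      using \<open>\<pi> \<in> P\<close> assms(4) unfolding nonbot_positions_def by auto
    then show ?thesis
      using liminf_is_eventually[OF li a] ctx_eq_nonBot by metis
  qed
  then obtain \<beta> where \<beta>: "\<forall>\<pi>\<in>P. \<beta> \<pi> < lam \<and> (\<forall>i. \<beta> \<pi> \<le> i \<and> i < lam \<longrightarrow> ts i \<pi> = ts lam \<pi>)"
    by metis
  obtain i0 where "i0 < lam" using \<open>is_limit lam\<close> unfolding is_limit_def by blast
  define B where "B = Max (insert i0 (\<beta> ` P))"
  have "B \<in> insert i0 (\<beta> ` P)" unfolding B_def using \<open>finite P\<close> by (intro Max_in) auto
  then have "B < lam" using \<beta> \<open>i0 < lam\<close> by auto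
  moreover have "\<beta> \<pi> \<le> B" if "\<pi> \<in> P" for \<pi>
    unfolding B_def using \<open>finite P\<close> that by simp
  ultimately show ?thesis using that \<beta> by blast
qed

section \<open>Replaying a rewrite step on an approximation\<close>

definition var_pos :: "('f, 'v) pterm \<Rightarrow> 'v \<Rightarrow> pos" where
  "var_pos l x = (SOME q. l q = Some (Var x))"

lemma var_pos: "x \<in> vars_of l \<Longrightarrow> l (var_pos l x) = Some (Var x)"
  unfolding vars_of_def var_pos_def by (auto intro: someI_ex)

lemma var_free_position_Fun:
  assumes "total l" "var_prefix l q = None" "l q \<noteq> None"
  obtains f where "l q = Some (Fun f)"
proof -
  obtain b where b: "l q = Some b" using assms(3) by blast
  have "b \<noteq> Var x" for x
    using assms(2) b unfolding var_prefix_eq_None_iff by (metis append_Nil2)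
  moreover have "b \<noteq> Bot" using assms(1) b unfolding total_def by auto
  ultimately show ?thesis using b that by (cases b) auto
qed

lemma match_var_free_positions:
  assumes wl: "wf_pterm ar l" and tl: "total l" and wt: "wf_pterm ar t"
    and Fun_agree: "\<And>q f. l q = Some (Fun f) \<Longrightarrow> t (p @ q) = Some (Fun f)"
  shows "var_prefix l q = None \<Longrightarrow> t (p @ q) = l q"
proof (induction q rule: rev_induct)
  case Nil
  then show ?case
    using var_free_position_Fun[OF tl Nil wf_pterm_root[OF wl]] Fun_agree by (metis append_Nil2)
next
  case (snoc i q)
  then have "t (p @ q) = l q" using var_prefix_prefix_None by metis
  then have same_domain: "t (p @ q @ [i]) \<noteq> None \<longleftrightarrow> l (q @ [i]) \<noteq> None"
    using wf_pterm_child[OF wt, of "p @ q" i] wf_pterm_child[OF wl, of q i] by simp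
  show ?case
  proof (cases "l (q @ [i])")
    case None
    then show ?thesis using same_domain by simp
  next
    case Some
    then show ?thesis
      using var_free_position_Fun[OF tl snoc.prems] Fun_agree by (metis option.discI)
  qed
qed

lemma linear_match:
  assumes wl: "wf_pterm ar l" and tl: "total l"
    and linear: "\<And>q q' x. l q = Some (Var x) \<Longrightarrow> l q' = Some (Var x) \<Longrightarrow> q = q'"
    and wt: "wf_pterm ar t" and tp: "t p \<noteq> None"
    and Fun_agree: "\<And>q f. l q = Some (Fun f) \<Longrightarrow> t (p @ q) = Some (Fun f)"
  obtains \<sigma> where "\<And>x. wf_pterm ar (\<sigma> x)" "subt t p = subst \<sigma> l"
proof
  define \<sigma> where "\<sigma> x = subt t (p @ (if x \<in> vars_of l then var_pos l x else []))" for x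
  show "wf_pterm ar (\<sigma> x)" for x
  proof (cases "x \<in> vars_of l \<and> var_pos l x \<noteq> []")
    case True
    then obtain q i where q: "var_pos l x = q @ [i]"
      by (cases "var_pos l x" rule: rev_cases) auto
    moreover have "l (q @ [i]) = Some (Var x)" using var_pos True q by metis
    ultimately obtain f where "l q = Some (Fun f)" "i < ar f"
      using wf_pterm_child[OF wl, of q i] by auto
    then have "t (p @ var_pos l x) \<noteq> None"
      using Fun_agree wf_pterm_child[OF wt, of "p @ q" i] q by simp
    then show ?thesis using True wf_subt[OF wt] unfolding \<sigma>_def by simp
  next
    case False
    then show ?thesis using tp wf_subt[OF wt] unfolding \<sigma>_def by auto
  qed
  show "subt t p = subst \<sigma> l"
  proof
    fix q
    show "subt t p q = subst \<sigma> l q"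
    proof (cases rule: var_prefix_cases[of l q])
      case 1
      then show ?thesis
        using match_var_free_positions[OF wl tl wt Fun_agree] by (simp add: subt_def subst_var_free)
    next
      case (2 q1 q2 x)
      then have "x \<in> vars_of l" unfolding vars_of_def by blast
      then have "var_pos l x = q1" by (rule linear[OF var_pos 2(2)])
      then show ?thesis
        using 2 \<open>x \<in> vars_of l\<close> subst_below_Var[OF wl 2(2)] by (simp add: \<sigma>_def subt_def)
    qed
  qed
qed

text \<open>The position of \<open>t\<^sub>0\<close> that determines position \<open>\<pi>\<close> of the result of a step
  \<open>t\<^sub>0 \<rightarrow> t\<^sub>1\<close> at \<open>p\<close> with rule \<open>l \<rightarrow> r\<close>: below a variable occurrence of \<open>r\<close> it is the
  corresponding position below the (by left-linearity unique) occurrence of that variable in \<open>l\<close>.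
  Positions of the non-variable part of \<open>r\<close> do not depend on \<open>t\<^sub>0\<close>; they are sent to the
  redex root \<open>p\<close>, which is harmless since \<open>p\<close> is in the pattern of \<open>l\<close> anyway.\<close>

definition ancestor_pos :: "('f, 'v) pterm \<Rightarrow> ('f, 'v) pterm \<Rightarrow> pos \<Rightarrow> pos \<Rightarrow> pos" where
  "ancestor_pos l r p \<pi> =
    (if \<exists>q. \<pi> = p @ q then
      (case var_prefix r (drop (length p) \<pi>) of
        None \<Rightarrow> p
      | Some (q1, x) \<Rightarrow> p @ var_pos l x @ drop (length q1) (drop (length p) \<pi>))
     else \<pi>)"

lemma ancestor_pos_var_free:
  "var_prefix r q = None \<Longrightarrow> ancestor_pos l r p (p @ q) = p"
  by (simp add: ancestor_pos_def)

lemma contractum_lookup: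
  assumes wl: "wf_pterm ar l" and vars: "vars_of r \<subseteq> vars_of l"
    and redex: "subt t p = subst \<sigma> l"
  shows "repl t p (subst \<sigma> r) \<pi> =
    (if \<exists>q. \<pi> = p @ q \<and> var_prefix r q = None then r (drop (length p) \<pi>)
     else t (ancestor_pos l r p \<pi>))"
proof (cases "\<exists>q. \<pi> = p @ q")
  case True
  then obtain q where \<pi>: "\<pi> = p @ q" by blast
  have contractum: "repl t p (subst \<sigma> r) \<pi> = subst \<sigma> r q"
    using \<pi> by (simp add: repl_def)
  show ?thesis
  proof (cases "var_prefix r q")
    case None
    then show ?thesis using \<pi> contractum by (simp add: subst_var_free)
  next
    case (Some a)
    then obtain q1 x where vp: "var_prefix r q = Some (q1, x)" by (cases a) auto
    from var_prefix_SomeD[OF vp] obtain q2 where q: "q = q1 @ q2" and "r q1 = Some (Var x)"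
      by blast
    then have "x \<in> vars_of l" using vars unfolding vars_of_def by blast
    have "t (p @ var_pos l x @ q2) = subst \<sigma> l (var_pos l x @ q2)"
      using fun_cong[OF redex, of "var_pos l x @ q2"] by (simp add: subt_def)
    also have "\<dots> = \<sigma> x q2"
      using subst_below_Var[OF wl var_pos[OF \<open>x \<in> vars_of l\<close>]] .
    also have "\<dots> = subst \<sigma> r q"
      using vp q by (simp add: subst_def)
    finally have "t (ancestor_pos l r p \<pi>) = repl t p (subst \<sigma> r) \<pi>"
      using \<pi> vp q contractum by (simp add: ancestor_pos_def)
    moreover have "\<not> (\<exists>q. \<pi> = p @ q \<and> var_prefix r q = None)"
      using \<pi> vp by simp
    ultimately show ?thesis by (simp only: if_False)
  qed
next
  case False
  then show ?thesis by (simp add: repl_def ancestor_pos_def)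
qed

lemma rule_lhs_root_Fun:
  assumes "trs ar R" "(l, r) \<in> R"
  obtains f where "l [] = Some (Fun f)"
proof -
  have wl: "wf_pterm ar l" and tl: "total l" and "\<forall>x. l [] \<noteq> Some (Var x)"
    using assms unfolding trs_def by auto
  then have "var_prefix l [] = None"
    by (simp add: var_prefix_eq_None_iff)
  then show ?thesis
    using var_free_position_Fun[OF tl _ wf_pterm_root[OF wl]] that by blast
qed

lemma rstep_at_replay:
  assumes trs: "trs ar R" and ll: "left_linear R" and lr: "(l, r) \<in> R"
    and wt: "wf_pterm ar t"
    and pattern: "\<And>q f. l q = Some (Fun f) \<Longrightarrow> t (p @ q) = Some (Fun f)"
  obtains \<sigma> where "subt t p = subst \<sigma> l" "rstep_at ar R p t (repl t p (subst \<sigma> r))"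
proof -
  have wl: "wf_pterm ar l" and tl: "total l"
    using trs lr unfolding trs_def by auto
  have linear: "\<And>q q' x. l q = Some (Var x) \<Longrightarrow> l q' = Some (Var x) \<Longrightarrow> q = q'"
    using ll lr unfolding left_linear_def by blast
  obtain f0 where "l [] = Some (Fun f0)"
    using rule_lhs_root_Fun[OF trs lr] .
  then have "t p \<noteq> None"
    using pattern[of "[]"] by simp
  obtain \<sigma> where "\<And>x. wf_pterm ar (\<sigma> x)" and redex: "subt t p = subst \<sigma> l"
    by (rule linear_match[of ar l t p]) (use wl tl linear wt \<open>t p \<noteq> None\<close> pattern in auto)
  then show ?thesis
    using that[OF redex] lr \<open>t p \<noteq> None\<close> unfolding rstep_at_def by blast
qed

lemma rstep_at_finitely_determined:
  assumes trs: "trs ar R" and ll: "left_linear R" and lf: "left_finite R"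
    and step: "rstep_at ar R p t0 t1"
    and "finite P" and P: "P \<subseteq> nonbot_positions t1"
  obtains Q where "finite Q" "Q \<subseteq> nonbot_positions t0"
    "\<And>t'. wf_pterm ar t' \<Longrightarrow> \<forall>\<pi>\<in>Q. t' \<pi> = t0 \<pi> \<Longrightarrow>
       \<exists>t''. rstep_at ar R p t' t'' \<and> (\<forall>\<pi>\<in>P. t'' \<pi> = t1 \<pi>)"
proof -
  obtain l r \<sigma> where lr: "(l, r) \<in> R" and redex: "subt t0 p = subst \<sigma> l"
    and t1: "t1 = repl t0 p (subst \<sigma> r)"
    using step unfolding rstep_at_def by blast
  have wl: "wf_pterm ar l" and vars: "vars_of r \<subseteq> vars_of l"
    using trs lr unfolding trs_def by auto
  have "finite {q. l q \<noteq> None}" using lf lr unfolding left_finite_def by auto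
  \<comment> \<open>the pattern keeps the rule applicable at \<open>p\<close>, the ancestors of \<open>P\<close> fix the result on \<open>P\<close>\<close>
  define pattern where "pattern = (\<lambda>q. p @ q) ` {q. \<exists>f. l q = Some (Fun f)}"
  define Q where "Q = pattern \<union> ancestor_pos l r p ` P"
  have t0_pattern: "t0 (p @ q) = Some (Fun f)" if "l q = Some (Fun f)" for q f
    using fun_cong[OF redex, of q] subst_Fun_position[OF wl that] by (simp add: subt_def)
  obtain f0 where "l [] = Some (Fun f0)"
    using rule_lhs_root_Fun[OF trs lr] .
  then have "p \<in> pattern"
    unfolding pattern_def by (intro image_eqI[where x = "[]"]) auto
  have pattern_nonbot: "pattern \<subseteq> nonbot_positions t0"
    using t0_pattern unfolding pattern_def nonbot_positions_def by auto
  have t1_lookup: "t1 \<pi> = (if \<exists>q. \<pi> = p @ q \<and> var_prefix r q = None then r (drop (length p) \<pi>)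
     else t0 (ancestor_pos l r p \<pi>))" for \<pi>
    using contractum_lookup[OF wl vars redex] t1 by simp
  show ?thesis
  proof
    have "pattern \<subseteq> (\<lambda>q. p @ q) ` {q. l q \<noteq> None}" unfolding pattern_def by auto
    then have "finite pattern"
      by (rule finite_surj[OF \<open>finite {q. l q \<noteq> None}\<close>])
    then show "finite Q"
      unfolding Q_def using \<open>finite P\<close> by simp
  next
    have ancestor: "ancestor_pos l r p \<pi> \<in> pattern \<or> t0 (ancestor_pos l r p \<pi>) = t1 \<pi>" for \<pi>
      using t1_lookup[of \<pi>] \<open>p \<in> pattern\<close>
      by (cases "\<exists>q. \<pi> = p @ q \<and> var_prefix r q = None") (auto simp: ancestor_pos_var_free)
    have "ancestor_pos l r p \<pi> \<in> nonbot_positions t0" if "\<pi> \<in> P" for \<pi>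
      using ancestor[of \<pi>] pattern_nonbot P that unfolding nonbot_positions_def by auto
    then show "Q \<subseteq> nonbot_positions t0"
      using pattern_nonbot unfolding Q_def by blast
  next
    fix t' assume wt': "wf_pterm ar t'" and agree: "\<forall>\<pi>\<in>Q. t' \<pi> = t0 \<pi>"
    have "t' (p @ q) = Some (Fun f)" if "l q = Some (Fun f)" for q f
      using agree t0_pattern[OF that] that unfolding Q_def pattern_def by auto
    then obtain \<sigma>' where redex': "subt t' p = subst \<sigma>' l"
      and rstep: "rstep_at ar R p t' (repl t' p (subst \<sigma>' r))"
      using rstep_at_replay[OF trs ll lr wt'] by metis
    have "repl t' p (subst \<sigma>' r) \<pi> = t1 \<pi>" if "\<pi> \<in> P" for \<pi>
    proof -
      have "t' (ancestor_pos l r p \<pi>) = t0 (ancestor_pos l r p \<pi>)"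
        using agree that unfolding Q_def by blast
      then show ?thesis
        using contractum_lookup[OF wl vars redex', of \<pi>] t1_lookup[of \<pi>]
        by (cases "\<exists>q. \<pi> = p @ q \<and> var_prefix r q = None") (simp_all only: if_True if_False)
    qed
    with rstep show "\<exists>t''. rstep_at ar R p t' t'' \<and> (\<forall>\<pi>\<in>P. t'' \<pi> = t1 \<pi>)" by blast
  qed
qed

section \<open>Transfinite induction along the reduction\<close>

lemma ozero_le: "ozero \<le> i"
  unfolding ozero_def by (rule Least_le) simp

lemma ordinal_cases:
  fixes \<gamma> :: "'i::wellorder"
  obtains "\<gamma> = ozero" | \<delta> where "\<delta> < \<gamma>" "\<gamma> = osuc \<delta>" | "is_limit \<gamma>"
proof (cases "\<exists>i. i < \<gamma>")
  case False
  then show ?thesis using ozero_le[of \<gamma>] that(1) by (metis order.not_eq_order_implies_strict)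
next
  case True
  show ?thesis
  proof (cases "\<forall>i<\<gamma>. \<exists>j. i < j \<and> j < \<gamma>")
    case True
    then show ?thesis using \<open>\<exists>i. i < \<gamma>\<close> that(3) unfolding is_limit_def by blast
  next
    case False
    then obtain \<delta> where \<delta>: "\<delta> < \<gamma>" "\<forall>j. \<not> (\<delta> < j \<and> j < \<gamma>)" by blast
    have "\<delta> < osuc \<delta>" "osuc \<delta> \<le> \<gamma>"
      unfolding osuc_def using \<delta>(1) by (auto intro: LeastI Least_le)
    then have "\<gamma> = osuc \<delta>" using \<delta>(2) by (metis order.not_eq_order_implies_strict)
    then show ?thesis using \<delta>(1) that(2) by blast
  qed
qed

definition approximable_by_reducts ::
  "('f \<Rightarrow> nat) \<Rightarrow> (('f, 'v) pterm \<times> ('f, 'v) pterm) set \<Rightarrow> ('f, 'v) pterm \<Rightarrow> ('f, 'v) pterm \<Rightarrow> bool"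
where
  "approximable_by_reducts ar R s u \<longleftrightarrow> (\<forall>P. finite P \<longrightarrow> P \<subseteq> nonbot_positions u \<longrightarrow>
     (\<exists>t'. (rstep ar R)\<^sup>*\<^sup>* s t' \<and> wf_pterm ar t' \<and> (\<forall>\<pi>\<in>P. t' \<pi> = u \<pi>)))"

lemma approximable_by_reducts_refl:
  "wf_pterm ar s \<Longrightarrow> approximable_by_reducts ar R s s"
  unfolding approximable_by_reducts_def by blast

lemma approximable_by_reducts_rstep_at:
  assumes "trs ar R" "left_linear R" "left_finite R"
    and approx: "approximable_by_reducts ar R s t0" and step: "rstep_at ar R p t0 t1"
  shows "approximable_by_reducts ar R s t1"
  unfolding approximable_by_reducts_def
proof (intro allI impI)
  fix P assume "finite P" "P \<subseteq> nonbot_positions t1"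
  then obtain Q where "finite Q" "Q \<subseteq> nonbot_positions t0"
    and replay: "\<And>t'. wf_pterm ar t' \<Longrightarrow> \<forall>\<pi>\<in>Q. t' \<pi> = t0 \<pi> \<Longrightarrow>
       \<exists>t''. rstep_at ar R p t' t'' \<and> (\<forall>\<pi>\<in>P. t'' \<pi> = t1 \<pi>)"
    by (rule rstep_at_finitely_determined[OF assms(1-3) step]) blast
  then obtain t' where "(rstep ar R)\<^sup>*\<^sup>* s t'" "wf_pterm ar t'" "\<forall>\<pi>\<in>Q. t' \<pi> = t0 \<pi>"
    using approx unfolding approximable_by_reducts_def by blast
  moreover obtain t'' where "rstep_at ar R p t' t''" "\<forall>\<pi>\<in>P. t'' \<pi> = t1 \<pi>"
    using replay calculation(2,3) by blast
  ultimately show "\<exists>t''. (rstep ar R)\<^sup>*\<^sup>* s t'' \<and> wf_pterm ar t'' \<and> (\<forall>\<pi>\<in>P. t'' \<pi> = t1 \<pi>)"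
    using rstep_at_preserves_wf[OF assms(1)] rtranclp.rtrancl_into_rtrancl[of "rstep ar R" s t' t'']
    unfolding rstep_def by blast
qed

lemma approximable_by_reducts_limit:
  assumes li: "liminf_is ar (\<lambda>i. ctx (ts i) (ps i)) lam (ts lam)" and "is_limit lam"
    and approx: "\<And>i. i < lam \<Longrightarrow> approximable_by_reducts ar R s (ts i)"
  shows "approximable_by_reducts ar R s (ts lam)"
  unfolding approximable_by_reducts_def
proof (intro allI impI)
  fix P assume P: "finite P" "P \<subseteq> nonbot_positions (ts lam)"
  then obtain \<beta> where "\<beta> < lam" and agree: "\<forall>\<pi>\<in>P. ts \<beta> \<pi> = ts lam \<pi>"
    using liminf_ctx_eventually_agrees[OF li \<open>is_limit lam\<close>] by blast
  then have "P \<subseteq> nonbot_positions (ts \<beta>)"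
    using P(2) unfolding nonbot_positions_def by auto
  then have "\<exists>t'. (rstep ar R)\<^sup>*\<^sup>* s t' \<and> wf_pterm ar t' \<and> (\<forall>\<pi>\<in>P. t' \<pi> = ts \<beta> \<pi>)"
    using approx[OF \<open>\<beta> < lam\<close>] P(1) unfolding approximable_by_reducts_def by blast
  with agree show "\<exists>t'. (rstep ar R)\<^sup>*\<^sup>* s t' \<and> wf_pterm ar t' \<and> (\<forall>\<pi>\<in>P. t' \<pi> = ts lam \<pi>)"
    by auto
qed

lemma strongly_p_converges_approximable:
  assumes "trs ar R" "left_linear R" "left_finite R"
    and conv: "strongly_p_converges ar R \<alpha> ts ps s t"
  shows "\<gamma> \<le> \<alpha> \<Longrightarrow> approximable_by_reducts ar R s (ts \<gamma>)"
proof (induction \<gamma> rule: less_induct)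
  case (less \<gamma>)
  have wf: "\<And>i. i \<le> \<alpha> \<Longrightarrow> wf_pterm ar (ts i)" and "ts ozero = s"
    using conv unfolding strongly_p_converges_def by auto
  show ?case
  proof (cases \<gamma> rule: ordinal_cases)
    case 1
    then show ?thesis
      using approximable_by_reducts_refl wf[OF ozero_le] \<open>ts ozero = s\<close> by metis
  next
    case (2 \<delta>)
    then have "rstep_at ar R (ps \<delta>) (ts \<delta>) (ts \<gamma>)"
      using conv less.prems unfolding strongly_p_converges_def by auto
    then show ?thesis
      using approximable_by_reducts_rstep_at[OF assms(1-3) less.IH] 2 less.prems by auto
  next
    case 3
    then have "liminf_is ar (\<lambda>i. ctx (ts i) (ps i)) \<gamma> (ts \<gamma>)"
      using conv less.prems unfolding strongly_p_converges_def by auto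
    then show ?thesis
      using approximable_by_reducts_limit 3 less.IH less.prems by fastforce
  qed
qed

theorem proposition6p5:
  fixes ar :: "'f \<Rightarrow> nat"
    and R :: "(('f, 'v) pterm \<times> ('f, 'v) pterm) set"
    and \<alpha> :: "'i::wellorder"
    and ts :: "'i \<Rightarrow> ('f, 'v) pterm"
    and ps :: "'i \<Rightarrow> pos"
    and s t :: "('f, 'v) pterm"
    and P :: "pos set"
  assumes "trs ar R" and "left_linear R" and "left_finite R"
    and "strongly_p_converges ar R \<alpha> ts ps s t"
    and "finite P"
    and "\<forall>p\<in>P. t p \<noteq> None \<and> t p \<noteq> Some Bot"
  shows "\<exists>t'. (rstep ar R)\<^sup>*\<^sup>* s t' \<and> (\<forall>p\<in>P. t p = t' p)"
proof -
  have "t = ts \<alpha>" using assms(4) unfolding strongly_p_converges_def by simp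
  then have "approximable_by_reducts ar R s t"
    using strongly_p_converges_approximable[OF assms(1-4) order_refl] by simp
  moreover have "P \<subseteq> nonbot_positions t"
    using assms(6) unfolding nonbot_positions_def by blast
  ultimately show ?thesis
    using assms(5) unfolding approximable_by_reducts_def by (metis (full_types))
qed

end
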